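(* Let $A$ be a group and $\phi$ a surjective, proper virtual endomorphism of $A$. Let $\Gamma\le\mathrm{Aut}(A)$ be such that $\phi$ is $\Gamma$-stable. Then the action of $A\rtimes\Gamma$ on the tree of cosets $\mathcal{T}_\phi$, given by $(a,\gamma).(a'\phi^{-n}(A))=a\gamma(a')\phi^{-n}(A)$, is faithful.
   Context: A virtual endomorphism of a group $A$ is a homomorphism $\phi$ from a finite index subgroup of $A$ to $A$. The iterated preimages $\phi^{-n}(A)$ ($n\ge 0$, with $\phi^{-0}(A)=A$) are finite index subgroups of $A$. $\phi$ is proper if $\bigcap_{n\in\mathbb{N}}\phi^{-n}(A)=\{1\}$. For $\Gamma\le\mathrm{Aut}(A)$, $\phi$ is $\Gamma$-stable if $\gamma(\phi^{-n}(A))=\phi^{-n}(A)$ for all $\gamma\in\Gamma$ and all $n\in\mathbb{N}$. The tree of cosets $\mathcal{T}_\phi$ has vertex set $\coprod_{n\ge0}A/\phi^{-n}(A)$ (root $A$) and an edge from $a\phi^{-n}(A)$ to $a\phi^{-(n+1)}(A)$ for each $n\ge 0$ and $a\in A$. $A\rtimes\Gamma$ is the semidirect product for the natural action of $\Gamma$ on $A$; when $\phi$ is $\Gamma$-stable the displayed formula defines an action by tree automorphisms. *)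

theory Defs
  imports "HOL-Algebra.Algebra"
begin

definition virtual_endo :: "('a, 'b) monoid_scheme \<Rightarrow> 'a set \<Rightarrow> ('a \<Rightarrow> 'a) \<Rightarrow> bool" where
  "virtual_endo A D phi \<longleftrightarrow>
     subgroup D A \<and> finite (rcosets\<^bsub>A\<^esub> D) \<and> phi \<in> hom (A\<lparr>carrier := D\<rparr>) A"

fun iter_preim :: "('a, 'b) monoid_scheme \<Rightarrow> 'a set \<Rightarrow> ('a \<Rightarrow> 'a) \<Rightarrow> nat \<Rightarrow> 'a set" where
  "iter_preim A D phi 0 = carrier A"
| "iter_preim A D phi (Suc n) = {x \<in> D. phi x \<in> iter_preim A D phi n}"

definition surjective_ve :: "('a, 'b) monoid_scheme \<Rightarrow> 'a set \<Rightarrow> ('a \<Rightarrow> 'a) \<Rightarrow> bool" where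
  "surjective_ve A D phi \<longleftrightarrow> phi ` D = carrier A"

definition proper_ve :: "('a, 'b) monoid_scheme \<Rightarrow> 'a set \<Rightarrow> ('a \<Rightarrow> 'a) \<Rightarrow> bool" where
  "proper_ve A D phi \<longleftrightarrow> (\<Inter>n. iter_preim A D phi n) = {\<one>\<^bsub>A\<^esub>}"

definition stable_ve :: "('a, 'b) monoid_scheme \<Rightarrow> 'a set \<Rightarrow> ('a \<Rightarrow> 'a) \<Rightarrow> ('a \<Rightarrow> 'a) set \<Rightarrow> bool" where
  "stable_ve A D phi \<Gamma> \<longleftrightarrow> (\<forall>\<gamma>\<in>\<Gamma>. \<forall>n. \<gamma> ` iter_preim A D phi n = iter_preim A D phi n)"

text \<open>Action of (a, gamma) in A \<rtimes> Gamma on the vertex a' phi^{-n}(A) of the tree of cosets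
  (vertex at level n represented by level n and the left coset).\<close>
definition coset_tree_act ::
  "('a, 'b) monoid_scheme \<Rightarrow> 'a set \<Rightarrow> ('a \<Rightarrow> 'a) \<Rightarrow> 'a \<times> ('a \<Rightarrow> 'a) \<Rightarrow> nat \<Rightarrow> 'a \<Rightarrow> nat \<times> 'a set" where
  "coset_tree_act A D phi g n a' =
     (n, (fst g \<otimes>\<^bsub>A\<^esub> snd g a') <#\<^bsub>A\<^esub> iter_preim A D phi n)"

definition faithful_coset_tree_action ::
  "('a, 'b) monoid_scheme \<Rightarrow> 'a set \<Rightarrow> ('a \<Rightarrow> 'a) \<Rightarrow> ('a \<Rightarrow> 'a) set \<Rightarrow> bool" where
  "faithful_coset_tree_action A D phi \<Gamma> \<longleftrightarrow>
     (\<forall>a\<in>carrier A. \<forall>\<gamma>\<in>\<Gamma>.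
        (\<forall>n. \<forall>a'\<in>carrier A. coset_tree_act A D phi (a, \<gamma>) n a' = (n, a' <#\<^bsub>A\<^esub> iter_preim A D phi n))
        \<longrightarrow> a = \<one>\<^bsub>A\<^esub> \<and> \<gamma> = \<one>\<^bsub>AutoGroup A\<^esub>)"

end

theory Submission
  imports Defs
begin

text \<open>The levels \<open>\<phi>\<^sup>-\<^sup>n(A)\<close> are subgroups. If \<open>(a, \<gamma>)\<close> fixes every vertex, then for every
  \<open>x \<in> A\<close> the element \<open>x\<inverse> a \<gamma>(x)\<close> lies in all of them, so properness forces \<open>a \<gamma>(x) = x\<close>.
  Taking \<open>x = 1\<close> gives \<open>a = 1\<close>, and then \<open>\<gamma>\<close> fixes every element of \<open>A\<close>.\<close>

lemma (in group_hom) subgroup_vimage: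
  assumes "subgroup K H"
  shows "subgroup {x \<in> carrier G. h x \<in> K} G"
proof (rule G.subgroupI)
  show "{x \<in> carrier G. h x \<in> K} \<noteq> {}"
    using subgroup.one_closed[OF assms] by force
qed (auto simp: subgroup.m_closed[OF assms] subgroup.m_inv_closed[OF assms])

lemma subgroup_iter_preim:
  assumes "group A" and "virtual_endo A D phi"
  shows "subgroup (iter_preim A D phi n) A"
proof (induction n)
  case 0
  show ?case using group.subgroup_self[OF assms(1)] by simp
next
  case (Suc n)
  have D: "subgroup D A" and phi: "phi \<in> hom (A\<lparr>carrier := D\<rparr>) A"
    using assms(2) unfolding virtual_endo_def by auto
  have "group_hom (A\<lparr>carrier := D\<rparr>) A phi"
    using subgroup.subgroup_is_group[OF D assms(1)] assms(1) phi
    by (simp add: group_hom_def group_hom_axioms_def)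
  then have "subgroup (iter_preim A D phi (Suc n)) (A\<lparr>carrier := D\<rparr>)"
    using group_hom.subgroup_vimage[OF _ Suc, of "A\<lparr>carrier := D\<rparr>" phi] by simp
  then show ?case
    using group.incl_subgroup[OF assms(1) D] by blast
qed

lemma (in group) l_coset_eq_imp_inv_mult_mem:
  assumes "subgroup H G" and "x \<in> carrier G" and "y \<in> carrier G"
    and "y <# H = x <# H"
  shows "inv x \<otimes> y \<in> H"
  using lcos_self[OF assms(3,1)] assms subgroup.lcos_module_imp[OF assms(1) is_group]
  by simp

lemma (in group) l_cosets_eq_imp_eq_if_Inter_trivial:
  assumes "\<And>n. subgroup (H n) G" and "(\<Inter>n. H n) = {\<one>}"
    and "x \<in> carrier G" and "y \<in> carrier G"
    and "\<And>n. y <# H n = x <# H n"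
  shows "y = x"
proof -
  have "inv x \<otimes> y \<in> (\<Inter>n. H n)"
    using assms by (blast intro: l_coset_eq_imp_inv_mult_mem)
  then have "inv x \<otimes> y = \<one>"
    using assms(2) by blast
  then show ?thesis
    using assms(3,4) by (simp add: inv_solve_left')
qed

lemma (in group) auto_eq_one_AutoGroupI:
  assumes "\<gamma> \<in> auto G" and "\<And>x. x \<in> carrier G \<Longrightarrow> \<gamma> x = x"
  shows "\<gamma> = \<one>\<^bsub>AutoGroup G\<^esub>"
proof -
  have "\<gamma> \<in> extensional (carrier G)"
    using assms(1) by (auto simp: auto_def BijGroup_def Bij_def)
  then have "\<gamma> = (\<lambda>x\<in>carrier G. x)"
    using assms(2) by (auto simp: extensional_def)
  then show ?thesis
    by (simp add: AutoGroup_def BijGroup_def)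
qed

theorem lemma4p3:
  fixes A :: "('a, 'b) monoid_scheme" and D :: "'a set" and phi :: "'a \<Rightarrow> 'a"
    and \<Gamma> :: "('a \<Rightarrow> 'a) set"
  assumes "group A"
    and "virtual_endo A D phi"
    and "surjective_ve A D phi"
    and "proper_ve A D phi"
    and "subgroup \<Gamma> (AutoGroup A)"
    and "stable_ve A D phi \<Gamma>"
  shows "faithful_coset_tree_action A D phi \<Gamma>"
  unfolding faithful_coset_tree_action_def
proof (intro ballI impI)
  interpret group A by fact
  fix a \<gamma>
  assume a: "a \<in> carrier A" and "\<gamma> \<in> \<Gamma>"
    and trivial: "\<forall>n. \<forall>x\<in>carrier A.
      coset_tree_act A D phi (a, \<gamma>) n x = (n, x <#\<^bsub>A\<^esub> iter_preim A D phi n)"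
  have \<gamma>: "\<gamma> \<in> auto A"
    using subgroup.subset[OF assms(5)] \<open>\<gamma> \<in> \<Gamma>\<close> by (auto simp: AutoGroup_def)
  then have \<gamma>_hom: "group_hom A A \<gamma>"
    using assms(1) by (simp add: group_hom_def group_hom_axioms_def auto_def)
  have fixed: "a \<otimes>\<^bsub>A\<^esub> \<gamma> x = x" if "x \<in> carrier A" for x
    using trivial that a assms(4) group_hom.hom_closed[OF \<gamma>_hom]
      subgroup_iter_preim[OF assms(1,2)]
    by (intro l_cosets_eq_imp_eq_if_Inter_trivial)
      (auto simp: coset_tree_act_def proper_ve_def)
  have "a = \<one>\<^bsub>A\<^esub>"
    using fixed[of "\<one>\<^bsub>A\<^esub>"] a group_hom.hom_one[OF \<gamma>_hom] by simp
  moreover have "\<gamma> = \<one>\<^bsub>AutoGroup A\<^esub>"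
    using \<gamma> fixed \<open>a = \<one>\<^bsub>A\<^esub>\<close> group_hom.hom_closed[OF \<gamma>_hom]
    by (intro auto_eq_one_AutoGroupI) auto
  ultimately show "a = \<one>\<^bsub>A\<^esub> \<and> \<gamma> = \<one>\<^bsub>AutoGroup A\<^esub>" ..
qed

end
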